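(* Let $L$ be a Lie algebra over $\Phi$ and let $I$ be an ideal of $L$ which is strongly non-degenerate as a Lie algebra. Then: (i) $\mathrm{Ann}_L(I)=\mathrm{QAnn}_L(I)$; (ii) if $\mathrm{Ann}_L(I)=0$, then $L$ is strongly non-degenerate.
   Context: $\Phi$ is a unital commutative ring in which $2$ and $3$ are invertible; all algebras are $\Phi$-modules. An element $x$ of a Lie algebra $M$ is an absolute zero divisor if $[x,[x,M]]=0$; $M$ is strongly non-degenerate if it has no non-zero absolute zero divisors. For subsets $X,Y$ of a Lie algebra, $\mathrm{Ann}_X(Y)=\{x\in X: [x,Y]=0\}$ and $\mathrm{QAnn}_X(Y)=\{x\in X: [x,[x,Y]]=0\}$. *)

theory Defs
  imports Main
begin

text \<open>A Lie algebra over a commutative ring 'r: the carrier is the whole type 'a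
  (an abelian group), with scalar multiplication smul and bracket br.\<close>

definition lie_algebra :: "('r::comm_ring_1 \<Rightarrow> 'a::ab_group_add \<Rightarrow> 'a) \<Rightarrow> ('a \<Rightarrow> 'a \<Rightarrow> 'a) \<Rightarrow> bool" where
  "lie_algebra smul br \<longleftrightarrow>
     (\<forall>r x y. smul r (x + y) = smul r x + smul r y) \<and>
     (\<forall>r s x. smul (r + s) x = smul r x + smul s x) \<and>
     (\<forall>r s x. smul (r * s) x = smul r (smul s x)) \<and>
     (\<forall>x. smul 1 x = x) \<and>
     (\<forall>x y z. br (x + y) z = br x z + br y z) \<and>
     (\<forall>x y z. br x (y + z) = br x y + br x z) \<and>
     (\<forall>r x y. br (smul r x) y = smul r (br x y)) \<and>
     (\<forall>r x y. br x (smul r y) = smul r (br x y)) \<and>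
     (\<forall>x. br x x = 0) \<and>
     (\<forall>x y z. br x (br y z) + br y (br z x) + br z (br x y) = 0)"

definition lie_ideal :: "('r::comm_ring_1 \<Rightarrow> 'a::ab_group_add \<Rightarrow> 'a) \<Rightarrow> ('a \<Rightarrow> 'a \<Rightarrow> 'a) \<Rightarrow> 'a set \<Rightarrow> bool" where
  "lie_ideal smul br I \<longleftrightarrow>
     0 \<in> I \<and>
     (\<forall>x\<in>I. \<forall>y\<in>I. x + y \<in> I) \<and>
     (\<forall>x\<in>I. - x \<in> I) \<and>
     (\<forall>r. \<forall>x\<in>I. smul r x \<in> I) \<and>
     (\<forall>x. \<forall>y\<in>I. br x y \<in> I)"

definition Ann :: "('a \<Rightarrow> 'a \<Rightarrow> 'a::zero) \<Rightarrow> 'a set \<Rightarrow> 'a set \<Rightarrow> 'a set" where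
  "Ann br X Y = {x \<in> X. \<forall>y\<in>Y. br x y = 0}"

definition QAnn :: "('a \<Rightarrow> 'a \<Rightarrow> 'a::zero) \<Rightarrow> 'a set \<Rightarrow> 'a set \<Rightarrow> 'a set" where
  "QAnn br X Y = {x \<in> X. \<forall>y\<in>Y. br x (br x y) = 0}"

definition abs_zero_divisor :: "('a \<Rightarrow> 'a \<Rightarrow> 'a::zero) \<Rightarrow> 'a set \<Rightarrow> 'a \<Rightarrow> bool" where
  "abs_zero_divisor br M x \<longleftrightarrow> x \<in> M \<and> (\<forall>y\<in>M. br x (br x y) = 0)"

definition strongly_nondeg :: "('a \<Rightarrow> 'a \<Rightarrow> 'a::zero) \<Rightarrow> 'a set \<Rightarrow> bool" where
  "strongly_nondeg br M \<longleftrightarrow> (\<forall>x. abs_zero_divisor br M x \<longrightarrow> x = 0)"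

end

theory Submission
  imports Defs
begin

(* The heart of the argument is a purely ring-theoretic lemma about a Lie ring with
   an ideal I and an element x with [x,[x,I]] = 0.  Writing d = ad x and
   T(p,q,r) = [d p,[d q,r]], absence of 2-torsion makes T symmetric on I and forces
   [d a,[d a,a]] to be an absolute zero divisor of I for every a in I.  If I is
   strongly non-degenerate this gives T(a,a,a) = 0; polarisation (no 6-torsion) gives
   T(a,a,c) = 0, i.e. d a is an absolute zero divisor of I, hence d a = 0.
   So every quasi-annihilator of I annihilates I, which is (i); (ii) follows since an
   absolute zero divisor of L lies in QAnn_L(I). *)

text \<open>A Lie ring: a biadditive, alternating bracket on an abelian group satisfying
  the Jacobi identity.\<close>

locale lie_ring =
  fixes br :: "'a::ab_group_add \<Rightarrow> 'a \<Rightarrow> 'a"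
  assumes br_add_left: "br (x + y) z = br x z + br y z"
    and br_add_right: "br x (y + z) = br x y + br x z"
    and br_self: "br x x = 0"
    and jacobi: "br x (br y z) + br y (br z x) + br z (br x y) = 0"
begin

lemma br_zero_left [simp]: "br 0 y = 0"
  using br_add_left[of 0 0 y] by simp

lemma br_zero_right [simp]: "br x 0 = 0"
  using br_add_right[of x 0 0] by simp

lemma br_neg_left: "br (- x) y = - br x y"
  using br_add_left[of x "- x" y] by (simp add: eq_neg_iff_add_eq_0 add.commute)

lemma br_neg_right: "br x (- y) = - br x y"
  using br_add_right[of x y "- y"] by (simp add: eq_neg_iff_add_eq_0 add.commute)

lemma br_anticomm: "br y x = - br x y"
proof -
  have "br (x + y) (x + y) = 0" by (rule br_self)
  then have "br x x + br y x + (br x y + br y y) = 0" by (simp add: br_add_left br_add_right)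
  then show ?thesis by (simp add: br_self eq_neg_iff_add_eq_0 add.commute)
qed

lemma br_leibniz: "br x (br u v) = br (br x u) v + br u (br x v)"
proof -
  have "br x (br u v) + br u (br v x) + br v (br x u) = 0" by (rule jacobi)
  moreover have "br u (br v x) = - br u (br x v)" using br_anticomm[of x v] br_neg_right by simp
  moreover have "br v (br x u) = - br (br x u) v" by (rule br_anticomm)
  ultimately show ?thesis by (simp add: algebra_simps eq_neg_iff_add_eq_0)
qed

end

locale lie_ring_ideal = lie_ring br for br :: "'a::ab_group_add \<Rightarrow> 'a \<Rightarrow> 'a" +
  fixes I :: "'a set"
  assumes ideal_add: "p \<in> I \<Longrightarrow> q \<in> I \<Longrightarrow> p + q \<in> I"
    and ideal_neg: "p \<in> I \<Longrightarrow> - p \<in> I"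
    and ideal_br: "q \<in> I \<Longrightarrow> br p q \<in> I"
begin

lemma ideal_br_left: "p \<in> I \<Longrightarrow> br p q \<in> I"
  using ideal_neg[OF ideal_br[of p q]] br_anticomm[of q p] by simp

end

locale quasi_annihilator = lie_ring_ideal br I
  for br :: "'a::ab_group_add \<Rightarrow> 'a \<Rightarrow> 'a" and I +
  fixes x :: 'a
  assumes no_2_torsion: "(z::'a) + z = 0 \<Longrightarrow> z = 0"
    and ad_square_zero: "u \<in> I \<Longrightarrow> br x (br x u) = 0"
begin

abbreviation d :: "'a \<Rightarrow> 'a" where "d u \<equiv> br x u"

definition tri :: "'a \<Rightarrow> 'a \<Rightarrow> 'a \<Rightarrow> 'a" where
  "tri p q r = br (d p) (br (d q) r)"

text \<open>Elements of d(I) commute: expand d(d[p,q]) = 0 by the Leibniz rule.\<close>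

lemma d_images_commute:
  assumes "p \<in> I" "q \<in> I"
  shows "br (d p) (d q) = 0"
proof -
  have "d (d (br p q)) = br (d (d p)) q + br (d p) (d q) + (br (d p) (d q) + br p (d (d q)))"
    using br_leibniz[of x p q] br_leibniz[of x "d p" q] br_leibniz[of x p "d q"]
      br_add_right[of x "br (d p) q" "br p (d q)"] by simp
  moreover have "d (d (br p q)) = 0" using ad_square_zero ideal_br assms by blast
  ultimately have "br (d p) (d q) + br (d p) (d q) = 0" using ad_square_zero assms by simp
  then show ?thesis by (rule no_2_torsion)
qed

lemma d_kills_bracket:
  assumes "p \<in> I" "q \<in> I"
  shows "d (br (d p) q) = 0"
  using br_leibniz[of x "d p" q] ad_square_zero[OF assms(1)] d_images_commute[OF assms] by simp

lemma tri_eq_d: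
  assumes "p \<in> I" "q \<in> I" "r \<in> I"
  shows "tri p q r = d (br p (br (d q) r))"
  using br_leibniz[of x p "br (d q) r"] d_kills_bracket[OF assms(2,3)] by (simp add: tri_def)

lemma tri_swap12:
  assumes "p \<in> I" "q \<in> I"
  shows "tri p q r = tri q p r"
  using br_leibniz[of "d p" "d q" r] d_images_commute[OF assms] by (simp add: tri_def)

lemma tri_swap23:
  assumes "p \<in> I" "q \<in> I" "r \<in> I"
  shows "tri p q r = tri p r q"
proof -
  have "br (d p) (d (br q r)) = 0" using d_images_commute assms ideal_br by blast
  then have "br (d p) (br (d q) r) + br (d p) (br q (d r)) = 0"
    using br_leibniz[of x q r] br_add_right by simp
  moreover have "br q (d r) = - br (d r) q" by (rule br_anticomm)
  ultimately show ?thesis by (simp add: tri_def br_neg_right eq_neg_iff_add_eq_0)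
qed

lemma tri_cycle:
  assumes "p \<in> I" "q \<in> I" "r \<in> I"
  shows "tri p q r = tri r p q"
  using tri_swap12 tri_swap23 assms by metis

lemma tri_add1: "tri (p + q) r w = tri p r w + tri q r w"
  by (simp add: tri_def br_add_left br_add_right)

lemma tri_add2: "tri p (q + r) w = tri p q w + tri p r w"
  by (simp add: tri_def br_add_left br_add_right)

lemma tri_add3: "tri p q (r + w) = tri p q r + tri p q w"
  by (simp add: tri_def br_add_right)

lemma tri_neg1: "tri (- p) r w = - tri p r w"
  by (simp add: tri_def br_neg_left br_neg_right)

lemma tri_neg2: "tri p (- r) w = - tri p r w"
  by (simp add: tri_def br_neg_left br_neg_right)

lemma tri_neg3: "tri p r (- w) = - tri p r w"
  by (simp add: tri_def br_neg_right)

lemma d_bracket_with_cube: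
  assumes a: "a \<in> I" and e: "e \<in> I"
  shows "d (br e (br (d a) a)) = br (d a) (br (d a) e)"
proof -
  have "d (br e (br (d a) a)) = br (d e) (br (d a) a)"
    using br_leibniz[of x e "br (d a) a"] d_kills_bracket[OF a a] by simp
  also have "\<dots> = tri e a a" by (simp add: tri_def)
  also have "\<dots> = tri a a e" using tri_cycle[OF a a e] by simp
  finally show ?thesis by (simp add: tri_def)
qed

lemma cube_is_d:
  assumes a: "a \<in> I"
  shows "br (d a) (br (d a) a) = d (br a (br (d a) a))"
  using tri_eq_d[OF a a a] by (simp add: tri_def)

lemma cube_commutes_with_d_image:
  assumes a: "a \<in> I" and e: "e \<in> I"
  defines "y \<equiv> d a"
  defines "u \<equiv> br y a" and "n \<equiv> br y e"
  defines "s \<equiv> br y u"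
  shows "br s n = 0"
proof -
  define w where "w = br a u"
  have wI: "w \<in> I" using ideal_br_left a by (simp add: w_def)
  have s_d: "s = d w" using cube_is_d[OF a] by (simp add: s_def u_def y_def w_def)
  have euI: "br e u \<in> I" using ideal_br_left e by simp
  have yy_eu: "br y (br y (br e u)) = br (br y n) u"
  proof -
    have "br y (br y (br e u)) = tri (br e u) a a"
      using tri_cycle[OF a a euI] by (simp add: tri_def y_def)
    also have "\<dots> = br (br y n) u"
      using d_bracket_with_cube[OF a e] by (simp add: tri_def u_def y_def n_def)
    finally show ?thesis .
  qed
  have y_es: "br y (br e s) = - br s n"
  proof -
    have "br y (br s e) = tri a w e" by (simp add: tri_def y_def s_d)
    also have "\<dots> = tri w a e" using tri_swap12[OF a wI] by simp
    also have "\<dots> = br s n" by (simp add: tri_def s_d n_def y_def)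
    finally show ?thesis using br_anticomm[of s e] br_neg_right by (metis minus_minus)
  qed
  have "br y (br e u) = br n u + br e s"
    using br_leibniz[of y e u] by (simp add: n_def s_def)
  then have "br y (br n u) = br (br y n) u + br s n"
    using yy_eu y_es br_add_right by (simp add: algebra_simps)
  moreover have "br (br y n) u = br y (br n u) - br n s"
    using br_leibniz[of y n u] by (simp add: s_def)
  moreover have "br n s = - br s n" by (rule br_anticomm)
  ultimately have "br s n + br s n = 0" by (simp add: algebra_simps)
  then show ?thesis by (rule no_2_torsion)
qed

lemma cube_abs_zero_divisor:
  assumes a: "a \<in> I" and e: "e \<in> I"
  defines "y \<equiv> d a"
  defines "s \<equiv> br y (br y a)"
  shows "br s (br s e) = 0"
proof -
  define w where "w = br a (br y a)"
  define v where "v = br s e"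
  have wI: "w \<in> I" using ideal_br_left a by (simp add: w_def)
  have s_d: "s = d w" using cube_is_d[OF a] by (simp add: s_def w_def y_def)
  have yv: "br y v = 0"
  proof -
    have "br y s = 0" using d_images_commute[OF a wI] by (simp add: y_def s_d)
    moreover have "br s (br y e) = 0"
      using cube_commutes_with_d_image[OF a e] by (simp add: s_def y_def)
    ultimately show ?thesis using br_leibniz[of y s e] by (simp add: v_def)
  qed
  have dv: "d v = 0"
    using br_leibniz[of x s e] ad_square_zero[OF wI] d_images_commute[OF wI e]
    by (simp add: v_def s_d)
  have avI: "br a v \<in> I" using ideal_br_left a by simp
  have "br y (br (br y a) v) = tri a a (br a v)"
    using br_leibniz[of y a v] yv by (simp add: tri_def y_def)
  also have "\<dots> = tri (br a v) a a" using tri_cycle[OF a a avI] by simp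
  also have "\<dots> = 0" using br_leibniz[of x a v] dv yv by (simp add: tri_def y_def)
  finally have "br y (br (br y a) v) = 0" .
  then show ?thesis using br_leibniz[of y "br y a" v] yv by (simp add: s_def v_def)
qed

end

locale nondeg_quasi_annihilator = quasi_annihilator br I x
  for br :: "'a::ab_group_add \<Rightarrow> 'a \<Rightarrow> 'a" and I x +
  assumes no_3_torsion: "(z::'a) + z + z = 0 \<Longrightarrow> z = 0"
    and ideal_nondeg: "strongly_nondeg br I"
begin

lemma nondeg_rule: "z \<in> I \<Longrightarrow> (\<And>c. c \<in> I \<Longrightarrow> br z (br z c) = 0) \<Longrightarrow> z = 0"
  using ideal_nondeg unfolding strongly_nondeg_def abs_zero_divisor_def by blast

lemma no_6_torsion: "(z::'a) + z + z + z + z + z = 0 \<Longrightarrow> z = 0"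
proof -
  assume "z + z + z + z + z + z = 0"
  then have "(z + z) + (z + z) + (z + z) = 0" by (simp add: add.assoc)
  then have "z + z = 0" by (rule no_3_torsion)
  then show "z = 0" by (rule no_2_torsion)
qed

text \<open>Strong non-degeneracy of I applied to the absolute zero divisor [d a,[d a,a]].\<close>

lemma tri_diagonal: "a \<in> I \<Longrightarrow> tri a a a = 0"
  unfolding tri_def
  by (rule nondeg_rule) (auto intro: ideal_br cube_abs_zero_divisor)

text \<open>Polarisation: expanding tri at a + c and a - c leaves six copies of tri a a c.\<close>

lemma tri_polarised:
  assumes a: "a \<in> I" and c: "c \<in> I"
  shows "tri a a c = 0"
proof -
  have sym_a: "tri a c a = tri a a c" "tri c a a = tri a a c"
    using tri_swap23[OF a a c] tri_cycle[OF a a c] by auto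
  have sym_c: "tri c a c = tri a c c" "tri c c a = tri a c c"
    using tri_swap12[OF c a] tri_cycle[OF a c c] tri_swap23[OF c c a] by auto
  have "tri (a + c) (a + c) (a + c) = 0" using tri_diagonal ideal_add a c by blast
  then have plus: "tri a a c + tri a a c + tri a a c + (tri a c c + tri a c c + tri a c c) = 0"
    using tri_diagonal[OF a] tri_diagonal[OF c] sym_a sym_c
    by (simp add: tri_add1 tri_add2 tri_add3 algebra_simps)
  have "tri (a + - c) (a + - c) (a + - c) = 0" using tri_diagonal ideal_add ideal_neg a c by blast
  then have "- (tri a a c + tri a a c + tri a a c) + (tri a c c + tri a c c + tri a c c) = 0"
    unfolding tri_add1 tri_add2 tri_add3 tri_neg1 tri_neg2 tri_neg3
    using tri_diagonal[OF a] tri_diagonal[OF c] sym_a sym_c by (simp add: algebra_simps)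
  with plus have "tri a a c + tri a a c + tri a a c + tri a a c + tri a a c + tri a a c = 0"
    by (simp add: algebra_simps)
  then show ?thesis by (rule no_6_torsion)
qed

text \<open>By polarisation d a is an absolute zero divisor of I, hence zero.\<close>

theorem annihilates_ideal: "a \<in> I \<Longrightarrow> br x a = 0"
  by (rule nondeg_rule) (auto intro: ideal_br tri_polarised[unfolded tri_def])

end

lemma lie_algebra_lie_ring: "lie_algebra smul br \<Longrightarrow> lie_ring br"
  unfolding lie_algebra_def lie_ring_def by blast

lemma lie_ideal_lie_ring_ideal:
  "lie_algebra smul br \<Longrightarrow> lie_ideal smul br I \<Longrightarrow> lie_ring_ideal br I"
  unfolding lie_ring_ideal_def lie_ring_ideal_axioms_def lie_ideal_def
  by (simp add: lie_algebra_lie_ring)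

lemma smul_of_nat:
  assumes "lie_algebra smul br"
  shows "smul (of_nat n) z = (\<Sum>i<n. z)"
proof (induction n)
  case 0
  have "smul 0 z = smul 0 z + smul 0 z"
    using assms unfolding lie_algebra_def by (metis add_0)
  then show ?case by simp
next
  case (Suc n)
  then show ?case using assms unfolding lie_algebra_def by (simp add: add.commute)
qed

lemma no_torsion_if_invertible:
  fixes smul :: "'r::comm_ring_1 \<Rightarrow> 'a::ab_group_add \<Rightarrow> 'a"
  assumes L: "lie_algebra smul br" and inv: "\<exists>u::'r. of_nat n * u = 1"
    and z: "(\<Sum>i<n. (z::'a)) = 0"
  shows "z = 0"
proof -
  obtain u :: 'r where u: "of_nat n * u = 1" using inv by blast
  have mult: "\<And>r s x. smul (r * s) x = smul r (smul s x)" and one: "\<And>x. smul 1 x = x"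
    and add: "\<And>r x y. smul r (x + y) = smul r x + smul r y"
    using L by (simp_all add: lie_algebra_def)
  have "z = smul (u * of_nat n) z" using one u by (simp add: mult.commute)
  also have "\<dots> = smul u 0" using mult smul_of_nat[OF L] z by simp
  also have "\<dots> = 0" using add[of u 0 0] by simp
  finally show ?thesis .
qed

lemma Ann_subset_QAnn: "lie_ring br \<Longrightarrow> Ann br X Y \<subseteq> QAnn br X Y"
  unfolding Ann_def QAnn_def by (auto dest: lie_ring.br_zero_right)

lemma QAnn_subset_Ann:
  assumes "lie_ring_ideal br I"
    and "\<And>z::'a. z + z = 0 \<Longrightarrow> z = 0" and "\<And>z::'a. z + z + z = 0 \<Longrightarrow> z = 0"
    and "strongly_nondeg br I"
  shows "QAnn br UNIV I \<subseteq> Ann br (UNIV :: 'a::ab_group_add set) I"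
proof
  fix x assume "x \<in> QAnn br UNIV I"
  then have "nondeg_quasi_annihilator br I x"
    using assms unfolding nondeg_quasi_annihilator_def nondeg_quasi_annihilator_axioms_def
      quasi_annihilator_def quasi_annihilator_axioms_def QAnn_def by blast
  then show "x \<in> Ann br UNIV I"
    unfolding Ann_def using nondeg_quasi_annihilator.annihilates_ideal by blast
qed

text \<open>Part (ii): an absolute zero divisor of the whole algebra quasi-annihilates I.\<close>

lemma strongly_nondeg_if_QAnn_trivial:
  assumes "QAnn br UNIV I = {0}"
  shows "strongly_nondeg br UNIV"
  using assms unfolding strongly_nondeg_def abs_zero_divisor_def QAnn_def by blast

theorem proposition2p3:
  fixes smul :: "'r::comm_ring_1 \<Rightarrow> 'a::ab_group_add \<Rightarrow> 'a"
    and br :: "'a \<Rightarrow> 'a \<Rightarrow> 'a"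
    and I :: "'a set"
  assumes two_inv: "\<exists>u::'r. 2 * u = 1"
    and three_inv: "\<exists>u::'r. 3 * u = 1"
    and L: "lie_algebra smul br"
    and I: "lie_ideal smul br I"
    and snd: "strongly_nondeg br I"
  shows "Ann br UNIV I = QAnn br UNIV I \<and>
         (Ann br UNIV I = {0} \<longrightarrow> strongly_nondeg br UNIV)"
proof -
  have no_2: "z + z = 0 \<Longrightarrow> z = 0" for z :: 'a
  proof (rule no_torsion_if_invertible[OF L, of "2::nat"])
    show "\<exists>u::'r. of_nat (2::nat) * u = 1" using two_inv by (simp only: of_nat_numeral)
    show "z + z = 0 \<Longrightarrow> (\<Sum>i<(2::nat). z) = 0" by (simp add: numeral_2_eq_2)
  qed
  have no_3: "z + z + z = 0 \<Longrightarrow> z = 0" for z :: 'a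
  proof (rule no_torsion_if_invertible[OF L, of "3::nat"])
    show "\<exists>u::'r. of_nat (3::nat) * u = 1" using three_inv by (simp only: of_nat_numeral)
    show "z + z + z = 0 \<Longrightarrow> (\<Sum>i<(3::nat). z) = 0" by (simp add: numeral_3_eq_3 add.assoc)
  qed
  have "lie_ring_ideal br I" using lie_ideal_lie_ring_ideal[OF L I] .
  then have eq: "Ann br UNIV I = QAnn br UNIV I"
    using QAnn_subset_Ann[OF _ no_2 no_3 snd] Ann_subset_QAnn lie_ring_ideal.axioms(1) by blast
  then show ?thesis using strongly_nondeg_if_QAnn_trivial by metis
qed

end
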